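(* Let $f\colon X\to X$ be a totally transitive homeomorphism of a metric space $X$ and let $\mu$ be a Borel probability measure on $X$ inner-distal with respect to $f$. If $X$ is $\mu$-Baire, then $\mu(\operatorname{Int}\operatorname{Per}(f))=0$.
   Context: $\mathcal{P}(x)=\{y\colon \inf_{n\in\mathbb{Z}} d(f^n(x),f^n(y))=0\}$; $\mu$ is inner-distal if $\mu(\operatorname{Int}\mathcal{P}(x))=0$ for all $x$. A set $F$ is $\mu$-nowhere-dense if $\mu(\operatorname{Int}\overline{F})=0$; $\mu$-meagre means a countable union of $\mu$-nowhere-dense sets; $X$ is $\mu$-Baire if $\mu(\operatorname{Int}A)=0$ for every $\mu$-meagre $A$. A homeomorphism is transitive if it has a dense orbit; $f$ is totally transitive if $f^n$ is transitive for every integer $n\ge1$. $\operatorname{Per}(f)=\{p\colon f^n(p)=p$ for some $n\ge1\}$. *)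

theory Defs
  imports "HOL-Probability.Probability"
begin

definition homeo :: "('a::topological_space \<Rightarrow> 'a) \<Rightarrow> bool" where
  "homeo f \<longleftrightarrow> (\<exists>g. homeomorphism UNIV UNIV f g)"

definition iter_int :: "('a \<Rightarrow> 'a) \<Rightarrow> int \<Rightarrow> 'a \<Rightarrow> 'a" where
  "iter_int f n = (if 0 \<le> n then f ^^ nat n else inv f ^^ nat (- n))"

definition proximal_cell :: "('a::metric_space \<Rightarrow> 'a) \<Rightarrow> 'a \<Rightarrow> 'a set" where
  "proximal_cell f x = {y. (INF n::int. dist (iter_int f n x) (iter_int f n y)) = 0}"

definition inner_distal :: "'a::metric_space measure \<Rightarrow> ('a \<Rightarrow> 'a) \<Rightarrow> bool" where
  "inner_distal \<mu> f \<longleftrightarrow> (\<forall>x. measure \<mu> (interior (proximal_cell f x)) = 0)"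

definition mu_nowhere_dense :: "'a::topological_space measure \<Rightarrow> 'a set \<Rightarrow> bool" where
  "mu_nowhere_dense \<mu> F \<longleftrightarrow> measure \<mu> (interior (closure F)) = 0"

definition mu_meagre :: "'a::topological_space measure \<Rightarrow> 'a set \<Rightarrow> bool" where
  "mu_meagre \<mu> A \<longleftrightarrow> (\<exists>F::nat \<Rightarrow> 'a set. (\<forall>n. mu_nowhere_dense \<mu> (F n)) \<and> A = (\<Union>n. F n))"

definition mu_Baire :: "'a::topological_space measure \<Rightarrow> bool" where
  "mu_Baire \<mu> \<longleftrightarrow> (\<forall>A. mu_meagre \<mu> A \<longrightarrow> measure \<mu> (interior A) = 0)"

definition transitive_map :: "('a::topological_space \<Rightarrow> 'a) \<Rightarrow> bool" where
  "transitive_map f \<longleftrightarrow> (\<exists>x. closure {iter_int f n x | n. True} = UNIV)"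

definition totally_transitive :: "('a::topological_space \<Rightarrow> 'a) \<Rightarrow> bool" where
  "totally_transitive f \<longleftrightarrow> (\<forall>n::nat. 1 \<le> n \<longrightarrow> transitive_map (f ^^ n))"

definition Per :: "('a \<Rightarrow> 'a) \<Rightarrow> 'a set" where
  "Per f = {p. \<exists>n::nat. 1 \<le> n \<and> (f ^^ n) p = p}"

end

theory Submission
  imports Defs
begin

text \<open>\<open>Per f\<close> is the countable union of the closed sets \<open>Fix (f^(k+1))\<close>, so if its interior had
  positive measure, \<open>\<mu>\<close>-Baireness would give some \<open>Fix (f^(k+1))\<close> with nonempty interior. The
  transitive map \<open>f^(k+1)\<close> has a dense orbit, which must enter this open set of fixed points;
  so the orbit is a single fixed point, and the space, being its closure, is a singleton. On a
  one-point space the proximal cell of that point is everything and has measure 1,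
  contradicting inner-distality.\<close>

lemma continuous_on_funpow:
  fixes f :: "'a::topological_space \<Rightarrow> 'a"
  assumes "continuous_on UNIV f"
  shows "continuous_on UNIV (f ^^ n)"
proof (induction n)
  case 0
  then show ?case by simp
next
  case (Suc n)
  then show ?case
    unfolding funpow.simps(2) by (intro continuous_on_compose continuous_on_subset[OF assms]) auto
qed

lemma funpow_fixpoint: "f x = x \<Longrightarrow> (f ^^ n) x = x"
  by (induction n) auto

lemma homeo_imp_bij: "homeo f \<Longrightarrow> bij f"
  unfolding homeo_def homeomorphism_def by (metis UNIV_I bij_betw_byWitness subset_UNIV)

lemma homeo_imp_continuous: "homeo f \<Longrightarrow> continuous_on UNIV f"
  unfolding homeo_def homeomorphism_def by blast

lemma iter_int_fixpoint:
  assumes "bij g" "g x = x"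
  shows "iter_int g m x = x"
proof -
  have "inv g x = x" using assms by (metis bij_is_inj inv_f_f)
  then show ?thesis
    unfolding iter_int_def using assms(2) by (simp add: funpow_fixpoint)
qed

lemma iter_int_fixpoint_imp_fixpoint:
  assumes "bij g" and fixed: "g (iter_int g m x) = iter_int g m x"
  shows "g x = x"
proof -
  define y where "y = iter_int g m x"
  \<comment> \<open>\<open>x\<close> is the image of \<open>y\<close> under the opposite iterate, which fixes \<open>y\<close> as \<open>g\<close> does.\<close>
  have "inv g y = y" using assms unfolding y_def by (metis bij_is_inj inv_f_f)
  have "x = y"
  proof (cases "0 \<le> m")
    case True
    then have "x = (inv g ^^ nat m) ((g ^^ nat m) x)"
      using inv_fn_o_fn_is_id[OF \<open>bij g\<close>] by (metis comp_apply)
    also have "\<dots> = y" using True \<open>inv g y = y\<close> by (simp add: y_def iter_int_def funpow_fixpoint)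
    finally show ?thesis .
  next
    case False
    then have "x = (g ^^ nat (- m)) ((inv g ^^ nat (- m)) x)"
      using fn_o_inv_fn_is_id[OF \<open>bij g\<close>] by (metis comp_apply)
    also have "\<dots> = y" using False fixed by (simp add: y_def iter_int_def funpow_fixpoint)
    finally show ?thesis .
  qed
  then show ?thesis using fixed by (simp add: y_def)
qed

lemma transitive_map_fixpoints_interior_imp_singleton:
  fixes g :: "'a::t1_space \<Rightarrow> 'a"
  assumes "bij g" "transitive_map g" "interior {p. g p = p} \<noteq> {}"
  obtains x :: 'a where "UNIV = {x}"
proof -
  obtain x where dense: "closure {iter_int g n x | n. True} = UNIV"
    using assms(2) unfolding transitive_map_def by blast
  then obtain m where "iter_int g m x \<in> interior {p. g p = p}"
    using open_Int_closure_eq_empty[OF open_interior] assms(3) by blast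
  then have "g x = x"
    using iter_int_fixpoint_imp_fixpoint[OF assms(1)] interior_subset by blast
  then have "{iter_int g n x | n. True} = {x}"
    using iter_int_fixpoint[OF assms(1)] by auto
  then have "UNIV = {x}" using dense by simp
  then show ?thesis by (rule that)
qed

lemma mu_Baire_interior_Union:
  fixes F :: "nat \<Rightarrow> 'a::topological_space set"
  assumes "mu_Baire \<mu>" "measure \<mu> (interior (\<Union>n. F n)) \<noteq> 0"
  obtains n where "measure \<mu> (interior (closure (F n))) \<noteq> 0"
proof (rule ccontr)
  assume "\<not> thesis"
  then have "mu_nowhere_dense \<mu> (F n)" for n
    using that unfolding mu_nowhere_dense_def by blast
  then have "mu_meagre \<mu> (\<Union>n. F n)"
    unfolding mu_meagre_def by blast
  then show False using assms unfolding mu_Baire_def by blast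
qed

lemma Per_eq_Union_fixpoints: "Per f = (\<Union>k. {p. (f ^^ Suc k) p = p})"
  unfolding Per_def by (auto simp: Suc_le_eq gr0_conv_Suc)

lemma not_inner_distal_singleton:
  fixes \<mu> :: "'a::metric_space measure"
  assumes "prob_space \<mu>" "space \<mu> = UNIV" "UNIV = {x :: 'a}"
  shows "\<not> inner_distal \<mu> f"
proof -
  have "(INF n::int. dist (iter_int f n x) (iter_int f n y)) = 0" for y
  proof -
    have "y = x" using assms(3) by blast
    then show ?thesis by simp
  qed
  then have "proximal_cell f x = UNIV" unfolding proximal_cell_def by blast
  then have "measure \<mu> (interior (proximal_cell f x)) = 1"
    using prob_space.prob_space[OF assms(1)] assms(2) by simp
  then show ?thesis unfolding inner_distal_def by (metis zero_neq_one)
qed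

theorem lemma3p8:
  fixes f :: "'a::metric_space \<Rightarrow> 'a" and \<mu> :: "'a measure"
  assumes "homeo f"
    and "totally_transitive f"
    and "prob_space \<mu>" and "sets \<mu> = sets borel"
    and "inner_distal \<mu> f"
    and "mu_Baire \<mu>"
  shows "measure \<mu> (interior (Per f)) = 0"
proof (rule ccontr)
  assume "measure \<mu> (interior (Per f)) \<noteq> 0"
  then obtain k where k: "measure \<mu> (interior (closure {p. (f ^^ Suc k) p = p})) \<noteq> 0"
    using mu_Baire_interior_Union[OF assms(6)] unfolding Per_eq_Union_fixpoints by blast
  define g where "g = f ^^ Suc k"
  have "bij g" unfolding g_def using homeo_imp_bij[OF assms(1)] by (rule bij_fn)
  moreover have "transitive_map g"
    using assms(2) unfolding totally_transitive_def g_def by (metis One_nat_def Suc_le_mono le0)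
  moreover have "interior {p. g p = p} \<noteq> {}"
  proof -
    have "closed {p. g p = p}"
      unfolding g_def using continuous_on_funpow[OF homeo_imp_continuous[OF assms(1)]]
      by (intro closed_Collect_eq continuous_on_id)
    then show ?thesis using k by (auto simp: g_def)
  qed
  ultimately obtain x :: 'a where "UNIV = {x}"
    by (rule transitive_map_fixpoints_interior_imp_singleton)
  moreover have "space \<mu> = UNIV" using sets_eq_imp_space_eq[OF assms(4)] by simp
  ultimately show False using not_inner_distal_singleton assms(3,5) by blast
qed

end
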